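(* Let $F=\{f_1,\dots,f_m\}$ be an IFS of contracting similitudes of $\mathbb{R}^d$ with attractor $A$. (a) If $h\in\mathcal{N}$, then $f_k^{-1}\circ h\circ f_j\in\mathcal{N}$ for all $j,k\in\{1,\dots,m\}$. (b) With $K=\bigcup_{h\in\mathcal{N}}h(A)$, one has $K\subseteq f_k(K)$ for each $k$. (c) $f_k(U_1)\subseteq U_1$ for each $k=1,\dots,m$.
   Context: $F^0=\{\mathrm{id}\}$, $F^k$ is the set of maps $f_{i_1}\circ\cdots\circ f_{i_k}$, $F^*=\bigcup_{k\ge0}F^k$; a piece of $A$ is $f'(A)$ with $f'\in F^*$. $\mathcal{N}$ is the set of all maps $h=f^{-1}g$ with $f,g\in F^*$ (of arbitrary lengths) such that $h(A)$ contains no piece of $A$. $d(x,E)=\inf\{|x-y|:y\in E\}$, and $U_1=\{x\in\mathbb{R}^d: d(x,A)<\inf_{h\in\mathcal{N}} d(x,h(A))\}$ (infimum over the empty set is $+\infty$). *)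

theory Defs
  imports "HOL-Analysis.Analysis"
begin

definition contracting_similitude :: "('a::euclidean_space \<Rightarrow> 'a) \<Rightarrow> bool" where
  "contracting_similitude f \<longleftrightarrow>
     (\<exists>r. 0 < r \<and> r < 1 \<and> (\<forall>x y. dist (f x) (f y) = r * dist x y))"

definition similitude_IFS :: "nat \<Rightarrow> (nat \<Rightarrow> 'a::euclidean_space \<Rightarrow> 'a) \<Rightarrow> bool" where
  "similitude_IFS m f \<longleftrightarrow> m \<ge> 1 \<and> (\<forall>i\<in>{1..m}. contracting_similitude (f i))"

definition is_attractor :: "nat \<Rightarrow> (nat \<Rightarrow> 'a::euclidean_space \<Rightarrow> 'a) \<Rightarrow> 'a set \<Rightarrow> bool" where
  "is_attractor m f A \<longleftrightarrow> compact A \<and> A \<noteq> {} \<and> A = (\<Union>i\<in>{1..m}. f i ` A)"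

definition word_map :: "(nat \<Rightarrow> 'a \<Rightarrow> 'a) \<Rightarrow> nat list \<Rightarrow> 'a \<Rightarrow> 'a" where
  "word_map f w = foldr (\<lambda>i g. f i \<circ> g) w id"

definition Fstar :: "nat \<Rightarrow> (nat \<Rightarrow> 'a \<Rightarrow> 'a) \<Rightarrow> ('a \<Rightarrow> 'a) set" where
  "Fstar m f = {word_map f w | w. set w \<subseteq> {1..m}}"

definition neighbour_maps :: "nat \<Rightarrow> (nat \<Rightarrow> 'a \<Rightarrow> 'a) \<Rightarrow> 'a set \<Rightarrow> ('a \<Rightarrow> 'a) set" where
  "neighbour_maps m f A =
     {h. (\<exists>f'\<in>Fstar m f. \<exists>g\<in>Fstar m f. h = inv f' \<circ> g) \<and>
         \<not> (\<exists>p\<in>Fstar m f. p ` A \<subseteq> h ` A)}"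

text \<open>U_1 = {x. d(x,A) < inf_{h in N} d(x,h(A))}, infimum taken in the extended reals
  (so the infimum over the empty set is +infinity).\<close>
definition U1 :: "nat \<Rightarrow> (nat \<Rightarrow> 'a::euclidean_space \<Rightarrow> 'a) \<Rightarrow> 'a set \<Rightarrow> 'a set" where
  "U1 m f A = {x. ereal (infdist x A) <
                  (INF h\<in>neighbour_maps m f A. ereal (infdist x (h ` A)))}"

end

theory Submission
  imports Defs
begin

text \<open>Every map in \<open>F\<^sup>*\<close> is a bijection sending \<open>A\<close> into itself. Hence if \<open>h = f'\<^sup>-\<^sup>1 g\<close> is a
  neighbour map, so is \<open>f\<^sub>k\<^sup>-\<^sup>1 h q = (f' f\<^sub>k)\<^sup>-\<^sup>1 (g q)\<close> for \<open>q \<in> F\<^sup>*\<close>: if it contained a piece \<open>p(A)\<close>,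
  then \<open>h(A) \<supseteq> h(q(A)) \<supseteq> f\<^sub>k(p(A))\<close> would contain a piece too. Taking \<open>q = f\<^sub>j\<close> gives (a) and
  \<open>q = id\<close> gives (b). For (c), a similitude \<open>f\<^sub>k\<close> of ratio \<open>r\<close> scales \<open>d(x, S)\<close> to
  \<open>d(f\<^sub>k x, f\<^sub>k S) = r d(x, S)\<close>; since \<open>f\<^sub>k(A) \<subseteq> A\<close> and every \<open>h(A)\<close>, \<open>h \<in> \<N>\<close>, is the image under \<open>f\<^sub>k\<close>
  of some \<open>h'(A)\<close>, \<open>h' \<in> \<N>\<close>, the defining inequality of \<open>U\<^sub>1\<close> at \<open>x\<close> is carried to \<open>f\<^sub>k x\<close>.\<close>

lemma dist_scaling_bij:
  fixes g :: "'a::euclidean_space \<Rightarrow> 'a"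
  assumes r: "0 < r" and g: "\<And>x y. dist (g x) (g y) = r * dist x y"
  shows "bij g"
proof -
  have inj: "inj g"
  proof (rule injI)
    fix x y assume "g x = g y"
    then have "r * dist x y = 0" using g by (metis dist_self)
    then show "x = y" using r by simp
  qed
  define l where "l x = g x - g 0" for x
  have "linear l"
    by (rule scaling_linear[where c = r]) (simp_all add: l_def dist_norm g[unfolded dist_norm])
  moreover have "inj l" using inj by (auto simp: l_def inj_on_def)
  ultimately have "surj l" by (metis linear_injective_imp_surjective)
  then have "surj g"
    by (metis (no_types, lifting) diff_add_cancel l_def surj_def)
  then show ?thesis using inj by (simp add: bij_def)
qed

lemma contracting_similitude_bij: "contracting_similitude g \<Longrightarrow> bij g"
  unfolding contracting_similitude_def by (blast intro: dist_scaling_bij)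

lemma word_map_Nil [simp]: "word_map f [] = id"
  by (simp add: word_map_def)

lemma word_map_Cons [simp]: "word_map f (k # w) = f k \<circ> word_map f w"
  by (simp add: word_map_def)

lemma word_map_append: "word_map f (v @ w) = word_map f v \<circ> word_map f w"
  by (induction v) auto

lemma id_in_Fstar: "id \<in> Fstar m f"
  unfolding Fstar_def by (auto intro: exI[of _ "[]"])

lemma comp_in_Fstar: "p \<in> Fstar m f \<Longrightarrow> q \<in> Fstar m f \<Longrightarrow> p \<circ> q \<in> Fstar m f"
proof -
  assume "p \<in> Fstar m f" "q \<in> Fstar m f"
  then obtain v w where "p = word_map f v" "q = word_map f w" "set (v @ w) \<subseteq> {1..m}"
    unfolding Fstar_def by auto
  then show ?thesis unfolding Fstar_def by (metis (mono_tags, lifting) CollectI word_map_append)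
qed

lemma generator_in_Fstar: "k \<in> {1..m} \<Longrightarrow> f k \<in> Fstar m f"
  unfolding Fstar_def by (auto intro!: exI[of _ "[k]"])

lemma Fstar_induct [consumes 1, case_names id comp]:
  assumes "p \<in> Fstar m f" and "P id"
    and "\<And>k p. k \<in> {1..m} \<Longrightarrow> P p \<Longrightarrow> P (f k \<circ> p)"
  shows "P p"
proof -
  obtain w where "p = word_map f w" "set w \<subseteq> {1..m}"
    using assms(1) unfolding Fstar_def by blast
  moreover have "set w \<subseteq> {1..m} \<Longrightarrow> P (word_map f w)"
    by (induction w) (use assms(2,3) in auto)
  ultimately show ?thesis by simp
qed

lemma Fstar_bij:
  assumes "\<forall>i\<in>{1..m}. bij (f i)" and "p \<in> Fstar m f"
  shows "bij p"
  using assms(2)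
proof (induction rule: Fstar_induct)
  case id
  show ?case by (rule bij_id)
next
  case (comp k p)
  then show ?case using assms(1) by (blast intro: bij_comp)
qed

lemma Fstar_image_subset:
  assumes "\<forall>i\<in>{1..m}. f i ` A \<subseteq> A" and "p \<in> Fstar m f"
  shows "p ` A \<subseteq> A"
  using assms(2) by (induction rule: Fstar_induct) (use assms(1) in fastforce)+


lemma neighbour_maps_conj:
  assumes bij: "\<forall>i\<in>{1..m}. bij (f i)" and inv_A: "\<forall>i\<in>{1..m}. f i ` A \<subseteq> A"
    and h: "h \<in> neighbour_maps m f A" and k: "k \<in> {1..m}" and q: "q \<in> Fstar m f"
  shows "inv (f k) \<circ> h \<circ> q \<in> neighbour_maps m f A"
proof -
  obtain f' g where f': "f' \<in> Fstar m f" and g: "g \<in> Fstar m f" and h_eq: "h = inv f' \<circ> g"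
    and no_piece: "\<not> (\<exists>p\<in>Fstar m f. p ` A \<subseteq> h ` A)"
    using h unfolding neighbour_maps_def by blast
  have "bij f'"
    using Fstar_bij bij f' by blast
  then have "inv (f k) \<circ> h \<circ> q = inv (f' \<circ> f k) \<circ> (g \<circ> q)"
    using bij k by (simp add: h_eq o_inv_distrib o_assoc)
  moreover have "f' \<circ> f k \<in> Fstar m f" "g \<circ> q \<in> Fstar m f"
    using f' g q k by (simp_all add: comp_in_Fstar generator_in_Fstar)
  moreover have "\<not> (\<exists>p\<in>Fstar m f. p ` A \<subseteq> (inv (f k) \<circ> h \<circ> q) ` A)"
  proof
    assume "\<exists>p\<in>Fstar m f. p ` A \<subseteq> (inv (f k) \<circ> h \<circ> q) ` A"
    then obtain p where p: "p \<in> Fstar m f" "p ` A \<subseteq> (inv (f k) \<circ> h \<circ> q) ` A" by blast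
    have "(f k \<circ> p) ` A \<subseteq> f k ` inv (f k) ` h ` q ` A"
      using p(2) by (auto simp: image_comp)
    also have "\<dots> = h ` q ` A"
      using bij k by (simp add: bij_is_surj image_f_inv_f)
    also have "\<dots> \<subseteq> h ` A"
      using Fstar_image_subset[OF inv_A q] by auto
    finally show False
      using no_piece comp_in_Fstar[OF generator_in_Fstar[OF k] p(1)] by blast
  qed
  ultimately show ?thesis unfolding neighbour_maps_def by blast
qed

lemma neighbour_union_subset_image:
  assumes bij: "\<forall>i\<in>{1..m}. bij (f i)" and inv_A: "\<forall>i\<in>{1..m}. f i ` A \<subseteq> A"
    and k: "k \<in> {1..m}"
  shows "(\<Union>h\<in>neighbour_maps m f A. h ` A) \<subseteq> f k ` (\<Union>h\<in>neighbour_maps m f A. h ` A)"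
proof
  fix x assume "x \<in> (\<Union>h\<in>neighbour_maps m f A. h ` A)"
  then obtain h a where h: "h \<in> neighbour_maps m f A" and a: "a \<in> A" and x: "x = h a"
    by blast
  have "inv (f k) \<circ> h \<in> neighbour_maps m f A"
    using neighbour_maps_conj[OF bij inv_A h k id_in_Fstar] by simp
  moreover have "inv (f k) x \<in> (inv (f k) \<circ> h) ` A"
    using a x by simp
  ultimately have "inv (f k) x \<in> (\<Union>h\<in>neighbour_maps m f A. h ` A)"
    by blast
  moreover have "x = f k (inv (f k) x)"
    using bij k by (simp add: bij_is_surj surj_f_inv_f)
  ultimately show "x \<in> f k ` (\<Union>h\<in>neighbour_maps m f A. h ` A)" by blast
qed

lemma infdist_image_scaling:
  assumes r: "0 < r" and g: "\<And>x y. dist (g x) (g y) = r * dist x y"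
  shows "infdist (g x) (g ` S) = r * infdist x S"
proof (cases "S = {}")
  case False
  have "r * infdist x S \<le> r * dist x a" if "a \<in> S" for a
    using that r by (simp add: infdist_le)
  then have lower: "r * infdist x S \<le> infdist (g x) (g ` S)"
    using False by (auto simp: infdist_notempty g intro: cINF_greatest)
  have "infdist (g x) (g ` S) / r \<le> dist x a" if "a \<in> S" for a
    using infdist_le[of "g a" "g ` S" "g x"] that r by (simp add: g field_simps)
  then have "infdist (g x) (g ` S) / r \<le> infdist x S"
    using False by (auto simp: infdist_notempty intro: cINF_greatest)
  then have "infdist (g x) (g ` S) \<le> r * infdist x S"
    using r by (simp add: field_simps)
  with lower show ?thesis by linarith
qed (simp add: infdist_def)

lemma U1_image_subset:
  fixes f :: "nat \<Rightarrow> 'a::euclidean_space \<Rightarrow> 'a"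
  assumes bij: "\<forall>i\<in>{1..m}. bij (f i)" and inv_A: "\<forall>i\<in>{1..m}. f i ` A \<subseteq> A"
    and "A \<noteq> {}" and k: "k \<in> {1..m}"
    and r: "0 < r" and scaling: "\<And>x y. dist (f k x) (f k y) = r * dist x y"
  shows "f k ` U1 m f A \<subseteq> U1 m f A"
proof
  fix z assume "z \<in> f k ` U1 m f A"
  then obtain x where x: "x \<in> U1 m f A" and z: "z = f k x" by blast
  let ?D = "\<lambda>y. INF h\<in>neighbour_maps m f A. ereal (infdist y (h ` A))"
  have "infdist z A \<le> infdist z (f k ` A)"
    using inv_A k \<open>A \<noteq> {}\<close> by (intro infdist_mono) auto
  also have "\<dots> = r * infdist x A"
    unfolding z by (rule infdist_image_scaling[OF r scaling])
  finally have "ereal (infdist z A) \<le> ereal r * ereal (infdist x A)"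
    by simp
  also have "\<dots> < ereal r * ?D x"
    using x r unfolding U1_def by (intro ereal_mult_strict_left_mono) auto
  also have "\<dots> \<le> ?D z"
  proof (rule INF_greatest)
    fix h assume h: "h \<in> neighbour_maps m f A"
    let ?h' = "inv (f k) \<circ> h"
    have "?h' \<in> neighbour_maps m f A"
      using neighbour_maps_conj[OF bij inv_A h k id_in_Fstar] by simp
    then have "ereal r * ?D x \<le> ereal r * ereal (infdist x (?h' ` A))"
      using r by (intro ereal_mult_left_mono INF_lower) auto
    also have "\<dots> = ereal (infdist z (f k ` ?h' ` A))"
      unfolding z infdist_image_scaling[OF r scaling] by simp
    also have "f k ` ?h' ` A = h ` A"
      using bij k by (metis bij_is_surj image_comp image_f_inv_f)
    finally show "ereal r * ?D x \<le> ereal (infdist z (h ` A))" .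
  qed
  finally show "z \<in> U1 m f A" unfolding U1_def by simp
qed

theorem mainTheorem5:
  fixes f :: "nat \<Rightarrow> 'a::euclidean_space \<Rightarrow> 'a" and m :: nat and A :: "'a set"
  assumes "similitude_IFS m f" and "is_attractor m f A"
  shows "(\<forall>h\<in>neighbour_maps m f A. \<forall>j\<in>{1..m}. \<forall>k\<in>{1..m}.
            inv (f k) \<circ> h \<circ> f j \<in> neighbour_maps m f A)
       \<and> (\<forall>k\<in>{1..m}. (\<Union>h\<in>neighbour_maps m f A. h ` A)
                        \<subseteq> f k ` (\<Union>h\<in>neighbour_maps m f A. h ` A))
       \<and> (\<forall>k\<in>{1..m}. f k ` U1 m f A \<subseteq> U1 m f A)"
proof (intro conjI ballI)
  have similitude: "\<forall>i\<in>{1..m}. contracting_similitude (f i)"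
    using assms(1) unfolding similitude_IFS_def by blast
  then have bij: "\<forall>i\<in>{1..m}. bij (f i)"
    by (simp add: contracting_similitude_bij)
  have inv_A: "\<forall>i\<in>{1..m}. f i ` A \<subseteq> A" and "A \<noteq> {}"
    using assms(2) unfolding is_attractor_def by blast+
  fix k assume k: "k \<in> {1..m}"
  show "inv (f k) \<circ> h \<circ> f j \<in> neighbour_maps m f A"
    if "h \<in> neighbour_maps m f A" "j \<in> {1..m}" for h j
    using neighbour_maps_conj[OF bij inv_A that(1) k generator_in_Fstar[OF that(2)]] .
  show "(\<Union>h\<in>neighbour_maps m f A. h ` A) \<subseteq> f k ` (\<Union>h\<in>neighbour_maps m f A. h ` A)"
    by (rule neighbour_union_subset_image[OF bij inv_A k])
  obtain r where "0 < r" "\<And>x y. dist (f k x) (f k y) = r * dist x y"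
    using similitude k unfolding contracting_similitude_def by blast
  then show "f k ` U1 m f A \<subseteq> U1 m f A"
    by (rule U1_image_subset[OF bij inv_A \<open>A \<noteq> {}\<close> k])
qed

end
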